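(* Let $\Sigma=\{\sigma,\sigma'\}$. There is a Pavlovian population protocol computing the predicate $[x.\sigma\ge x.\sigma']$. Explicitly: $Q=\{\sigma,\sigma',Y,N\}$, $\iota$ the inclusion, $\omega(\sigma)=\omega(Y)=1$, $\omega(\sigma')=\omega(N)=0$, with rules $NY\to YY$, $YN\to YY$, $N\sigma\to Y\sigma$, $\sigma N\to\sigma Y$, $Y\sigma'\to N\sigma'$, $\sigma'Y\to\sigma'N$, $\sigma\sigma'\to NY$, $\sigma'\sigma\to YN$, and $q_1q_2\to q_1q_2$ for all other pairs; this is the protocol associated to the payoff matrix with rows (player) and columns (opponent) ordered $N,Y,\sigma,\sigma'$: row $N$: $(1,-1,-1,1)$; row $Y$: $(0,1,1,-1)$; row $\sigma$: $(0,0,0,-1)$; row $\sigma'$: $(0,0,-1,0)$.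
   Context: A population protocol is a tuple $(Q,\Sigma,\iota,\omega,\delta)$ where $Q$ is a finite set of states, $\Sigma$ a finite input alphabet, $\iota:\Sigma\to Q$, $\omega:Q\to\{0,1\}$, and $\delta\subseteq Q^4$ the transition relation; we write $q_1q_2\to q_1'q_2'$ for $(q_1,q_2,q_1',q_2')\in\delta$. Computations take place among $n\ge 2$ agents. A configuration is a multiset of $n$ elements of $Q$. An input is a multiset $x$ of $n\ge 2$ elements of $\Sigma$ (equivalently an element of $\mathbb N^{\Sigma}$ with total mass $n$; $x.\sigma$ denotes the multiplicity of $\sigma$ in $x$), and its initial configuration is the multiset $\iota(x)$. We write $C\to C'$ if $C'$ is obtained from $C$ by choosing two of its elements (two distinct agents) in states $q_1,q_2$ and replacing them by $q_1',q_2'$ for some $(q_1,q_2,q_1',q_2')\in\delta$. An execution is an infinite sequence $C_0,C_1,\dots$ with $C_0$ an initial configuration and $C_i\to C_{i+1}$ for all $i$. An execution is fair if for every configuration $C$ occurring infinitely often and every $C'$ with $C\to C'$, $C'$ also occurs infinitely often. A protocol computes a predicate $p:\mathbb N^\Sigma\to\{0,1\}$ if for every input $x$ and every fair execution from $\iota(x)$, there is a time after which every agent's output $\omega(q)$ equals $p(x)$. A symmetric game on $Q$ is a real matrix $M=(M_{q,r})_{q,r\in Q}$ ($M_{q,r}$ = payoff of playing $q$ against $r$). For $q',y\in Q$, $BR_{\neq q'}(y)$ is the set of $x\in Q\setminus\{q'\}$ with $M_{z,y}\le M_{x,y}$ for all $z\in Q\setminus\{q'\}$. The transition relation associated to $M$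 consists of exactly those $(q_1,q_2,q_1',q_2')$ with: $q_1'=q_1$ if $M_{q_1,q_2}\ge0$, $q_1'\in BR_{\neq q_1}(q_2)$ if $M_{q_1,q_2}<0$; $q_2'=q_2$ if $M_{q_2,q_1}\ge0$, $q_2'\in BR_{\neq q_2}(q_1)$ if $M_{q_2,q_1}<0$. A population protocol is Pavlovian if $\delta$ equals the transition relation associated to some real matrix indexed by $Q\times Q$. *)

theory Defs
  imports Complex_Main "HOL-Library.Multiset"
begin

text \<open>Population protocols. The state set Q is the (finite) universe of the type 'q,
  the input alphabet is the universe of the type 's. Outputs are booleans (1 = True).\<close>

record ('q, 's) protocol =
  inp :: "'s \<Rightarrow> 'q"
  out :: "'q \<Rightarrow> bool"
  trans :: "('q \<times> 'q \<times> 'q \<times> 'q) set"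

definition step :: "('q, 's) protocol \<Rightarrow> 'q multiset \<Rightarrow> 'q multiset \<Rightarrow> bool" where
  "step P C C' \<longleftrightarrow> (\<exists>q1 q2 q1' q2'. (q1, q2, q1', q2') \<in> trans P \<and>
      {#q1, q2#} \<subseteq># C \<and> C' = C - {#q1, q2#} + {#q1', q2'#})"

definition initial_config :: "('q, 's) protocol \<Rightarrow> 's multiset \<Rightarrow> 'q multiset" where
  "initial_config P x = image_mset (inp P) x"

definition execution :: "('q, 's) protocol \<Rightarrow> 's multiset \<Rightarrow> (nat \<Rightarrow> 'q multiset) \<Rightarrow> bool" where
  "execution P x E \<longleftrightarrow> E 0 = initial_config P x \<and> (\<forall>i. step P (E i) (E (Suc i)))"

definition fair :: "('q, 's) protocol \<Rightarrow> (nat \<Rightarrow> 'q multiset) \<Rightarrow> bool" where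
  "fair P E \<longleftrightarrow> (\<forall>C C'. (\<exists>\<^sub>\<infinity>i. E i = C) \<longrightarrow> step P C C' \<longrightarrow> (\<exists>\<^sub>\<infinity>i. E i = C'))"

definition computes :: "('q, 's) protocol \<Rightarrow> ('s multiset \<Rightarrow> bool) \<Rightarrow> bool" where
  "computes P p \<longleftrightarrow> (\<forall>x E. size x \<ge> 2 \<longrightarrow> execution P x E \<longrightarrow> fair P E \<longrightarrow>
      (\<exists>T. \<forall>t\<ge>T. \<forall>q\<in>#E t. out P q = p x))"

definition BR_neq :: "('q \<Rightarrow> 'q \<Rightarrow> real) \<Rightarrow> 'q \<Rightarrow> 'q \<Rightarrow> 'q set" where
  "BR_neq M q' y = {x. x \<noteq> q' \<and> (\<forall>z. z \<noteq> q' \<longrightarrow> M z y \<le> M x y)}"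

definition game_trans :: "('q \<Rightarrow> 'q \<Rightarrow> real) \<Rightarrow> ('q \<times> 'q \<times> 'q \<times> 'q) set" where
  "game_trans M = {(q1, q2, q1', q2').
      (if M q1 q2 \<ge> 0 then q1' = q1 else q1' \<in> BR_neq M q1 q2) \<and>
      (if M q2 q1 \<ge> 0 then q2' = q2 else q2' \<in> BR_neq M q2 q1)}"

definition pavlovian :: "('q, 's) protocol \<Rightarrow> bool" where
  "pavlovian P \<longleftrightarrow> (\<exists>M. trans P = game_trans M)"

datatype sym = Sig | Sig'
datatype st = N | Y | In sym

definition maj_rules :: "(st \<times> st \<times> st \<times> st) set" where
  "maj_rules = {(N, Y, Y, Y), (Y, N, Y, Y), (N, In Sig, Y, In Sig), (In Sig, N, In Sig, Y),
     (Y, In Sig', N, In Sig'), (In Sig', Y, In Sig', N),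
     (In Sig, In Sig', N, Y), (In Sig', In Sig, Y, N)}"

definition maj_trans :: "(st \<times> st \<times> st \<times> st) set" where
  "maj_trans = maj_rules \<union>
     {(q1, q2, q1, q2) | q1 q2. \<not> (\<exists>a b. (q1, q2, a, b) \<in> maj_rules)}"

fun maj_out :: "st \<Rightarrow> bool" where
  "maj_out N = False" | "maj_out Y = True" | "maj_out (In Sig) = True" | "maj_out (In Sig') = False"

definition maj_protocol :: "(st, sym) protocol" where
  "maj_protocol = \<lparr>inp = In, out = maj_out, trans = maj_trans\<rparr>"

text \<open>Payoff matrix, rows = player, columns = opponent, order N, Y, sigma, sigma'.\<close>
fun st_idx :: "st \<Rightarrow> nat" where
  "st_idx N = 0" | "st_idx Y = 1" | "st_idx (In Sig) = 2" | "st_idx (In Sig') = 3"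

definition maj_matrix :: "st \<Rightarrow> st \<Rightarrow> real" where
  "maj_matrix q r = [[1, -1, -1, 1], [0, 1, 1, -1], [0, 0, 0, -1], [0, 0, -1, 0]] ! st_idx q ! st_idx r"

end

theory Submission
  imports Defs
begin

(* The protocol part is a standard "stable consensus" argument.
   For an arbitrary protocol with finitely many states, a fair execution visits
   some configuration infinitely often (there are finitely many configurations of
   a fixed size), and fairness propagates "infinitely often" along reachability.
   Hence, if every configuration satisfying an invariant can reach a silent
   configuration (one that no step changes) in which all agents output p x, the
   protocol computes p (lemma computes_by_silent_consensus).

   For the majority protocol the invariant (maj_inv) is: #sigma - #sigma' equals
   x.sigma - x.sigma', and if no sigma' is left then some Y or sigma is present.
   From any such configuration one first cancels sigma against sigma' until one of
   them disappears; then the survivors (sigma or Y, resp. sigma') convert every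
   opinion to the majority one, reaching a silent all-Y or all-N configuration.
   The Pavlovian part is a finite check of the transition relation against the
   best responses of the payoff matrix. *)


section \<open>Generic facts about population protocols\<close>

abbreviation reach :: "('q, 's) protocol \<Rightarrow> 'q multiset \<Rightarrow> 'q multiset \<Rightarrow> bool" where
  "reach P \<equiv> (step P)\<^sup>*\<^sup>*"

definition silent :: "('q, 's) protocol \<Rightarrow> 'q multiset \<Rightarrow> bool" where
  "silent P D \<longleftrightarrow> (\<forall>D'. step P D D' \<longrightarrow> D' = D)"

lemma step_size_eq:
  assumes "step P C C'"
  shows "size C' = size C"
proof -
  obtain q1 q2 q1' q2' where sub: "{#q1, q2#} \<subseteq># C" and C': "C' = C - {#q1, q2#} + {#q1', q2'#}"
    using assms unfolding step_def by blast
  have "size {#q1, q2#} \<le> size C" using sub by (rule size_mset_mono)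
  then show ?thesis using C' size_Diff_submset[OF sub] by simp
qed

text \<open>With finitely many states, an execution (whose configurations all have the
  size of the input) has some configuration that recurs infinitely often.\<close>
lemma execution_recurrent_config:
  assumes fin: "finite (UNIV :: 'q set)" and ex: "execution (P :: ('q, 's) protocol) x E"
  obtains C where "\<exists>\<^sub>\<infinity>i. E i = C"
proof -
  have E0: "E 0 = image_mset (inp P) x" and steps: "\<And>i. step P (E i) (E (Suc i))"
    using ex unfolding execution_def initial_config_def by auto
  have "size (E i) = size x" for i
    by (induction i) (simp_all add: E0 step_size_eq[OF steps])
  then have "range E \<subseteq> multisets_of_size UNIV (size x)"
    by (auto simp: multisets_of_size_def)
  then have "finite (range E)"
    using finite_multisets_of_size[OF fin] finite_subset by blast
  then obtain C where "infinite (E -` {C})"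
    using inf_img_fin_domE by blast
  then show ?thesis
    using that by (auto simp: frequently_cofinite vimage_def)
qed

lemma fair_reach_recurs:
  assumes "fair P E" "reach P C D" "\<exists>\<^sub>\<infinity>i. E i = C"
  shows "\<exists>\<^sub>\<infinity>i. E i = D"
  using assms(2,3)
proof (induction rule: rtranclp_induct)
  case (step D D')
  then show ?case using assms(1) unfolding fair_def by blast
qed

lemma execution_stays_silent:
  assumes "\<And>i. step P (E i) (E (Suc i))" "silent P (E T)" "t \<ge> T"
  shows "E t = E T"
  using assms(3)
proof (induction t rule: dec_induct)
  case (step t)
  then show ?case using assms(1)[of t] assms(2) unfolding silent_def by simp
qed simp

lemma computes_by_silent_consensus:
  fixes P :: "('q, 's) protocol"
  assumes fin: "finite (UNIV :: 'q set)"
    and inv_init: "\<And>x. size x \<ge> 2 \<Longrightarrow> I x (initial_config P x)"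
    and inv_step: "\<And>x C C'. I x C \<Longrightarrow> step P C C' \<Longrightarrow> I x C'"
    and consensus: "\<And>x C. size x \<ge> 2 \<Longrightarrow> I x C \<Longrightarrow>
       \<exists>D. reach P C D \<and> silent P D \<and> (\<forall>q\<in>#D. out P q = p x)"
  shows "computes P p"
  unfolding computes_def
proof (intro allI impI)
  fix x E
  assume size: "size x \<ge> 2" and ex: "execution P x E" and fair: "fair P E"
  have E0: "E 0 = initial_config P x" and steps: "\<And>i. step P (E i) (E (Suc i))"
    using ex unfolding execution_def by auto
  have inv: "I x (E i)" for i
  proof (induction i)
    case 0
    show ?case using inv_init[OF size] E0 by simp
  next
    case (Suc i)
    show ?case using inv_step[OF Suc steps] .
  qed
  obtain C where recC: "\<exists>\<^sub>\<infinity>i. E i = C"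
    using execution_recurrent_config[OF fin ex] .
  then obtain i where "E i = C" using frequently_ex by blast
  then obtain D where reachD: "reach P C D" and silentD: "silent P D"
      and outD: "\<forall>q\<in>#D. out P q = p x"
    using consensus[OF size] inv by blast
  have "\<exists>\<^sub>\<infinity>i. E i = D" using fair_reach_recurs[OF fair reachD recC] .
  then obtain T where ET: "E T = D" using frequently_ex by blast
  have "E t = D" if "t \<ge> T" for t
    using execution_stays_silent[of P E T t] steps silentD ET that by simp
  then show "\<exists>T. \<forall>t\<ge>T. \<forall>q\<in>#E t. out P q = p x"
    using outD by blast
qed

lemma pair_subseteq_mset:
  assumes "q1 \<noteq> q2" "q1 \<in># C" "q2 \<in># C"
  shows "{#q1, q2#} \<subseteq># C"
  using assms by (auto simp: insert_subset_eq_iff in_diff_count)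


section \<open>The majority protocol is Pavlovian\<close>

lemma all_st: "(\<forall>z. P z) \<longleftrightarrow> P N \<and> P Y \<and> P (In Sig) \<and> P (In Sig')"
  by (metis st.exhaust sym.exhaust)

lemma st_cases: "q = N \<or> q = Y \<or> q = In Sig \<or> q = In Sig'"
  by (metis st.exhaust sym.exhaust)

lemma finite_st: "finite (UNIV :: st set)"
proof -
  have UNIV_st: "(UNIV :: st set) = {N, Y, In Sig, In Sig'}"
    using st_cases by blast
  show ?thesis unfolding UNIV_st by simp
qed

lemma maj_matrix_entries:
  "maj_matrix N N = 1" "maj_matrix N Y = -1" "maj_matrix N (In Sig) = -1" "maj_matrix N (In Sig') = 1"
  "maj_matrix Y N = 0" "maj_matrix Y Y = 1" "maj_matrix Y (In Sig) = 1" "maj_matrix Y (In Sig') = -1"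
  "maj_matrix (In Sig) N = 0" "maj_matrix (In Sig) Y = 0" "maj_matrix (In Sig) (In Sig) = 0"
  "maj_matrix (In Sig) (In Sig') = -1"
  "maj_matrix (In Sig') N = 0" "maj_matrix (In Sig') Y = 0" "maj_matrix (In Sig') (In Sig) = -1"
  "maj_matrix (In Sig') (In Sig') = 0"
  by (simp_all add: maj_matrix_def)

text \<open>The listed rules are exactly the game dynamics of the payoff matrix: an agent
  with negative payoff switches to its (here unique) best response other than itself.\<close>
lemma maj_trans_game: "maj_trans = game_trans maj_matrix"
proof -
  have "(a, b, c, d) \<in> maj_trans \<longleftrightarrow> (a, b, c, d) \<in> game_trans maj_matrix" for a b c d
    using st_cases[of a] st_cases[of b] st_cases[of c] st_cases[of d]
    by (elim disjE)
      (simp_all add: maj_trans_def maj_rules_def game_trans_def BR_neq_def maj_matrix_entries all_st)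
  then show ?thesis by auto
qed


lemma maj_step_cases:
  assumes "step maj_protocol C C'"
  obtains q1 q2 q1' q2' where "(q1, q2, q1', q2') \<in> maj_rules" "{#q1, q2#} \<subseteq># C"
     "C' = C - {#q1, q2#} + {#q1', q2'#}"
  | "C' = C"
proof -
  obtain q1 q2 q1' q2' where t: "(q1, q2, q1', q2') \<in> maj_trans" and sub: "{#q1, q2#} \<subseteq># C"
     and C': "C' = C - {#q1, q2#} + {#q1', q2'#}"
    using assms unfolding step_def maj_protocol_def by auto
  show ?thesis
  proof (cases "(q1, q2, q1', q2') \<in> maj_rules")
    case False
    then have "q1' = q1 \<and> q2' = q2" using t unfolding maj_trans_def by auto
    then show ?thesis using that C' sub by (metis subset_mset.diff_add)
  qed (use that sub C' in blast)
qed

lemma maj_fire: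
  assumes "(q1, q2, q1', q2') \<in> maj_rules" "{#q1, q2#} \<subseteq># C"
  shows "step maj_protocol C (C - {#q1, q2#} + {#q1', q2'#})"
  using assms unfolding step_def maj_protocol_def maj_trans_def
  by (intro exI[of _ q1] exI[of _ q2] exI[of _ q1'] exI[of _ q2']) simp

text \<open>Configurations without N and sigma' (all yes), or without Y and sigma (all no),
  cannot change: no rule applies to two agents holding the same opinion.\<close>
definition all_yes :: "st multiset \<Rightarrow> bool" where
  "all_yes C \<longleftrightarrow> N \<notin># C \<and> In Sig' \<notin># C"

definition all_no :: "st multiset \<Rightarrow> bool" where
  "all_no C \<longleftrightarrow> Y \<notin># C \<and> In Sig \<notin># C"

lemma consensus_silent:
  assumes "all_yes C \<or> all_no C"
  shows "silent maj_protocol C"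
  unfolding silent_def
proof (intro allI impI)
  fix C' assume "step maj_protocol C C'"
  then show "C' = C"
  proof (cases rule: maj_step_cases)
    case (1 q1 q2 q1' q2')
    then have "q1 \<in># C" "q2 \<in># C" by (auto dest: mset_subset_eqD[of "{#q1, q2#}"])
    then show ?thesis using 1(1) assms unfolding maj_rules_def all_yes_def all_no_def by auto
  qed
qed


section \<open>The invariant\<close>

text \<open>The invariant: the input balance #sigma - #sigma' is conserved, and once no sigma'
  is left some agent of the yes-camp (Y or sigma) remains to spread its opinion.\<close>
definition maj_inv :: "sym multiset \<Rightarrow> st multiset \<Rightarrow> bool" where
  "maj_inv x C \<longleftrightarrow>
     int (count C (In Sig)) - int (count C (In Sig')) = int (count x Sig) - int (count x Sig') \<and>
     (count C (In Sig') = 0 \<longrightarrow> 0 < count C Y + count C (In Sig))"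

text \<open>Initially there are no Y agents, and at least two input agents; if none of them
  is a sigma', then some are sigma.\<close>
lemma maj_inv_init:
  assumes "size x \<ge> 2"
  shows "maj_inv x (initial_config maj_protocol x)"
proof -
  have count_In: "count (image_mset In x) (In s) = count x s" for s
    by (induction x) auto
  have "count (image_mset In x) Y = 0" by (auto simp: not_in_iff[symmetric])
  moreover have "0 < count x Sig" if "count x Sig' = 0"
  proof (rule ccontr)
    assume "\<not> 0 < count x Sig"
    then have "x = {#}" using that by (intro multiset_eqI) (metis sym.exhaust count_empty not_gr0)
    then show False using assms by simp
  qed
  ultimately show ?thesis
    unfolding maj_inv_def initial_config_def maj_protocol_def by (simp add: count_In)
qed

text \<open>Every rule keeps #sigma - #sigma'; a rule that removes the last Y or sigma either
  produces a Y or needs a sigma' partner that survives.\<close>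
lemma maj_rule_preserves_inv:
  assumes inv: "maj_inv x C" and rule: "(q1, q2, q1', q2') \<in> maj_rules" and sub: "{#q1, q2#} \<subseteq># C"
  shows "maj_inv x (C - {#q1, q2#} + {#q1', q2'#})"
proof -
  have le: "count {#q1, q2#} q \<le> count C q" for q
    using sub by (rule mset_subset_eq_count)
  show ?thesis
    using rule inv le[of "In Sig"] le[of "In Sig'"] le[of Y] le[of N]
    unfolding maj_rules_def maj_inv_def
    by (elim insertE emptyE) (simp_all flip: count_greater_zero_iff)
qed

lemma maj_inv_step:
  assumes "maj_inv x C" "step maj_protocol C C'"
  shows "maj_inv x C'"
  using assms(2) by (cases rule: maj_step_cases) (use assms(1) maj_rule_preserves_inv in auto)

lemma maj_inv_reach: "reach maj_protocol C D \<Longrightarrow> maj_inv x C \<Longrightarrow> maj_inv x D"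
  by (induction rule: rtranclp_induct) (auto intro: maj_inv_step)


section \<open>Reaching a consensus\<close>

lemma cancel_inputs:
  "\<exists>D. reach maj_protocol C D \<and> (count D (In Sig) = 0 \<or> count D (In Sig') = 0)"
proof (induction "count C (In Sig')" arbitrary: C)
  case 0
  then show ?case by (intro exI[of _ C]) simp
next
  case (Suc n)
  show ?case
  proof (cases "count C (In Sig) = 0")
    case True
    then show ?thesis by (intro exI[of _ C]) simp
  next
    case False
    then have sub: "{#In Sig, In Sig'#} \<subseteq># C"
      using Suc(2) by (intro pair_subseteq_mset) (auto simp flip: count_greater_zero_iff)
    define C' where "C' = C - {#In Sig, In Sig'#} + {#N, Y#}"
    have step: "step maj_protocol C C'"
      unfolding C'_def by (rule maj_fire[OF _ sub]) (simp add: maj_rules_def)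
    have "n = count C' (In Sig')" using Suc(2) unfolding C'_def by simp
    from Suc(1)[OF this] obtain D
      where "reach maj_protocol C' D" "count D (In Sig) = 0 \<or> count D (In Sig') = 0"
      by blast
    then show ?thesis using step by (meson converse_rtranclp_into_rtranclp)
  qed
qed

lemma convert_to_yes:
  "count C (In Sig') = 0 \<Longrightarrow> 0 < count C Y + count C (In Sig) \<Longrightarrow>
   \<exists>D. reach maj_protocol C D \<and> all_yes D"
proof (induction "count C N" arbitrary: C)
  case 0
  then show ?case by (intro exI[of _ C]) (simp add: all_yes_def not_in_iff)
next
  case (Suc n)
  obtain p where p: "p = Y \<or> p = In Sig" "p \<in># C"
    using Suc(4) by (metis add_gr_0 count_greater_zero_iff)
  have sub: "{#N, p#} \<subseteq># C"
    using Suc(2) p by (intro pair_subseteq_mset) (auto simp flip: count_greater_zero_iff)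
  define C' where "C' = C - {#N, p#} + {#Y, p#}"
  have step: "step maj_protocol C C'"
    unfolding C'_def using p(1) by (intro maj_fire[OF _ sub]) (auto simp: maj_rules_def)
  have "n = count C' N" "count C' (In Sig') = 0" "0 < count C' Y + count C' (In Sig)"
    using Suc(2,3) p(1) unfolding C'_def by auto
  from Suc(1)[OF this] obtain D where "reach maj_protocol C' D" "all_yes D"
    by blast
  then show ?case using step by (meson converse_rtranclp_into_rtranclp)
qed

lemma convert_to_no:
  "count C (In Sig) = 0 \<Longrightarrow> 0 < count C (In Sig') \<Longrightarrow>
   \<exists>D. reach maj_protocol C D \<and> all_no D"
proof (induction "count C Y" arbitrary: C)
  case 0
  then show ?case by (intro exI[of _ C]) (simp add: all_no_def not_in_iff)
next
  case (Suc n)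
  have sub: "{#Y, In Sig'#} \<subseteq># C"
    using Suc(2,4) by (intro pair_subseteq_mset) (auto simp flip: count_greater_zero_iff)
  define C' where "C' = C - {#Y, In Sig'#} + {#N, In Sig'#}"
  have step: "step maj_protocol C C'"
    unfolding C'_def by (rule maj_fire[OF _ sub]) (simp add: maj_rules_def)
  have "n = count C' Y" "count C' (In Sig) = 0" "0 < count C' (In Sig')"
    using Suc(2,3,4) unfolding C'_def by auto
  from Suc(1)[OF this] obtain D where "reach maj_protocol C' D" "all_no D"
    by blast
  then show ?case using step by (meson converse_rtranclp_into_rtranclp)
qed

text \<open>After cancellation the invariant decides which conversion phase applies, and
  the resulting consensus is silent with every agent outputting the majority.\<close>
lemma maj_reaches_consensus:
  assumes "maj_inv x C"
  shows "\<exists>D. reach maj_protocol C D \<and> silent maj_protocol D \<and>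
           (\<forall>q\<in>#D. out maj_protocol q = (count x Sig' \<le> count x Sig))"
proof -
  obtain D1 where D1: "reach maj_protocol C D1" "count D1 (In Sig) = 0 \<or> count D1 (In Sig') = 0"
    using cancel_inputs by blast
  have balance: "int (count D1 (In Sig)) - int (count D1 (In Sig')) = int (count x Sig) - int (count x Sig')"
    and witness: "count D1 (In Sig') = 0 \<Longrightarrow> 0 < count D1 Y + count D1 (In Sig)"
    using maj_inv_reach[OF D1(1) assms] unfolding maj_inv_def by auto
  show ?thesis
  proof (cases "count x Sig' \<le> count x Sig")
    case True
    then have no_sig': "count D1 (In Sig') = 0"
      using D1(2) balance by linarith
    from convert_to_yes[OF no_sig' witness[OF no_sig']] obtain D
      where "reach maj_protocol D1 D" "all_yes D" by blast
    moreover have "out maj_protocol q" if "q \<in># D" for q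
      using \<open>all_yes D\<close> that st_cases[of q] by (auto simp: all_yes_def maj_protocol_def)
    ultimately show ?thesis
      using True D1(1) consensus_silent by (meson rtranclp_trans)
  next
    case False
    then have "count D1 (In Sig) = 0" "0 < count D1 (In Sig')"
      using D1(2) balance by linarith+
    from convert_to_no[OF this] obtain D
      where "reach maj_protocol D1 D" "all_no D" by blast
    moreover have "\<not> out maj_protocol q" if "q \<in># D" for q
      using \<open>all_no D\<close> that st_cases[of q] by (auto simp: all_no_def maj_protocol_def)
    ultimately show ?thesis
      using False D1(1) consensus_silent by (meson rtranclp_trans)
  qed
qed

lemma maj_computes: "computes maj_protocol (\<lambda>x. count x Sig \<ge> count x Sig')"
  using finite_st maj_inv_init maj_inv_step maj_reaches_consensus
  by (rule computes_by_silent_consensus)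


theorem mainTheorem6:
  shows "pavlovian maj_protocol \<and> trans maj_protocol = game_trans maj_matrix \<and>
    computes maj_protocol (\<lambda>x. count x Sig \<ge> count x Sig')"
proof -
  have game: "trans maj_protocol = game_trans maj_matrix"
    using maj_trans_game by (simp add: maj_protocol_def)
  then have "pavlovian maj_protocol"
    unfolding pavlovian_def by blast
  then show ?thesis using game maj_computes by blast
qed

end
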